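(* Let $\alpha>0$. $LR(\alpha)$ holds if and only if $LR_{\mathrm{fermi}}(\alpha)$ holds (for the Fibonacci XY chain with fixed coupling $\lambda>0$ and phase $\omega$).
   Context: Setting: $V_j=\lambda\chi_{[1-\phi^{-1},1)}(j\phi^{-1}+\omega\bmod 1)$ with $\phi=\frac{1+\sqrt5}2$; $\mathcal H_n=\bigotimes_{j=1}^n\mathbb C^2$; $H_n^{XY}=-\sum_{j=1}^{n-1}(\sigma^x_j\sigma^x_{j+1}+\sigma^y_j\sigma^y_{j+1})+\sum_{j=1}^nV_j\sigma^z_j$ with Pauli matrices acting on the indicated factor; $\mathcal A_J=\bigotimes_{j\in J}\mathcal B(\mathbb C^2)$ embedded in $\mathcal B(\mathcal H_n)$; $\tau_t^n(A)=e^{itH_n^{XY}}Ae^{-itH_n^{XY}}$. Let $a_j=\frac12(\sigma^x_j-i\sigma^y_j)$ and define the Jordan–Wigner fermions $c_1=a_1$, $c_j=\sigma^z_1\cdots\sigma^z_{j-1}a_j$ for $2\le j\le n$. $LR(\alpha)$: there exist $C_0,\mu>0,v\ge0$ such that for all $n$, $1\le j<j'\le n$, $t>0$, $A\in\mathcal A_{\{j\}}$, $B\in\mathcal A_{\{j',\dots,n\}}$: $\|[\tau_t^n(A),B]\|\le C_0\|A\|\|B\|e^{-\mu(|j'-j|-vt^\alpha)}$. $LR_{\mathrm{fermi}}(\alpha)$: there exist $C_1,\mu>0,v\ge0$ such that for all $n$, $1\le j<j'\le n$, $t>0$, $B\in\mathcal A_{\{j',\dots,n\}}$: $\|[\tau_t^n(c_j),B]\|+\|[\tau_t^n(c_j^*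 ),B]\|\le C_1\|B\|e^{-\mu(|j'-j|-vt^\alpha)}$. (Constants $C_0,C_1,\mu,v$ in each property may differ, and are independent of $n,j,j',t,A,B$.) *)

theory Defs
  imports Complex_Main
begin

text \<open>Operators on H_n = tensor product of n copies of C^2, represented concretely
 as matrices indexed by computational basis configurations. A basis configuration
 is a set x \<subseteq> {1..n}: site j is in basis state e_1 if j \<in> x and in e_0 otherwise.
 Only entries indexed by subsets of {1..n} are relevant.\<close>

type_synonym op = "nat set \<Rightarrow> nat set \<Rightarrow> complex"

definition mid :: "nat \<Rightarrow> op" where
  "mid n = (\<lambda>x y. if x = y then 1 else 0)"

definition mmult :: "nat \<Rightarrow> op \<Rightarrow> op \<Rightarrow> op" where
  "mmult n A B = (\<lambda>x y. \<Sum>z\<in>Pow {1..n}. A x z * B z y)"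

definition madd :: "op \<Rightarrow> op \<Rightarrow> op" where
  "madd A B = (\<lambda>x y. A x y + B x y)"

definition msub :: "op \<Rightarrow> op \<Rightarrow> op" where
  "msub A B = (\<lambda>x y. A x y - B x y)"

definition mscale :: "complex \<Rightarrow> op \<Rightarrow> op" where
  "mscale c A = (\<lambda>x y. c * A x y)"

definition madj :: "op \<Rightarrow> op" where
  "madj A = (\<lambda>x y. cnj (A y x))"

fun mpow :: "nat \<Rightarrow> op \<Rightarrow> nat \<Rightarrow> op" where
  "mpow n A 0 = mid n"
| "mpow n A (Suc k) = mmult n A (mpow n A k)"

definition mexp :: "nat \<Rightarrow> op \<Rightarrow> op" where
  "mexp n A = (\<lambda>x y. (\<Sum>k. mpow n A k x y / of_nat (fact k)))"

definition opnorm :: "nat \<Rightarrow> op \<Rightarrow> real" where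
  "opnorm n A = Sup {sqrt (\<Sum>x\<in>Pow {1..n}. (cmod (\<Sum>y\<in>Pow {1..n}. A x y * v y))\<^sup>2) | v.
                     (\<Sum>y\<in>Pow {1..n}. (cmod (v y))\<^sup>2) \<le> 1}"

definition comm :: "nat \<Rightarrow> op \<Rightarrow> op \<Rightarrow> op" where
  "comm n A B = msub (mmult n A B) (mmult n B A)"

text \<open>2x2 matrices indexed by bool (False = e_0, True = e_1).\<close>
definition pauli_x :: "bool \<Rightarrow> bool \<Rightarrow> complex" where
  "pauli_x a b = (if a \<noteq> b then 1 else 0)"

definition pauli_y :: "bool \<Rightarrow> bool \<Rightarrow> complex" where
  "pauli_y a b = (if a = b then 0 else if a then \<i> else - \<i>)"

definition pauli_z :: "bool \<Rightarrow> bool \<Rightarrow> complex" where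
  "pauli_z a b = (if a = b then (if a then -1 else 1) else 0)"

definition lower :: "bool \<Rightarrow> bool \<Rightarrow> complex" where
  "lower a b = (pauli_x a b - \<i> * pauli_y a b) / 2"

text \<open>The 2x2 matrix M acting on factor j (identity on the others).\<close>
definition site :: "nat \<Rightarrow> (bool \<Rightarrow> bool \<Rightarrow> complex) \<Rightarrow> op" where
  "site j M = (\<lambda>x y. if x - {j} = y - {j} then M (j \<in> x) (j \<in> y) else 0)"

text \<open>Local algebra A_J = (tensor over j in J of B(C^2)) tensor identity, inside B(H_n).\<close>
definition loc_alg :: "nat \<Rightarrow> nat set \<Rightarrow> op set" where
  "loc_alg n J = {M. \<exists>f. \<forall>x\<in>Pow {1..n}. \<forall>y\<in>Pow {1..n}.
       M x y = (if x - J = y - J then f (x \<inter> J) (y \<inter> J) else 0)}"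

definition golden :: real where
  "golden = (1 + sqrt 5) / 2"

definition pot :: "real \<Rightarrow> real \<Rightarrow> nat \<Rightarrow> real" where
  "pot lam \<omega> j = lam * (let s = frac (real j / golden + \<omega>) in
        if 1 - 1 / golden \<le> s \<and> s < 1 then 1 else 0)"

definition msum :: "nat set \<Rightarrow> (nat \<Rightarrow> op) \<Rightarrow> op" where
  "msum S F = (\<lambda>x y. \<Sum>j\<in>S. F j x y)"

definition HXY :: "real \<Rightarrow> real \<Rightarrow> nat \<Rightarrow> op" where
  "HXY lam \<omega> n = madd
     (mscale (-1) (msum {1..<n} (\<lambda>j. madd (mmult n (site j pauli_x) (site (j+1) pauli_x))
                                            (mmult n (site j pauli_y) (site (j+1) pauli_y)))))
     (msum {1..n} (\<lambda>j. mscale (complex_of_real (pot lam \<omega> j)) (site j pauli_z)))"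

definition tau :: "real \<Rightarrow> real \<Rightarrow> nat \<Rightarrow> real \<Rightarrow> op \<Rightarrow> op" where
  "tau lam \<omega> n t A = mmult n (mmult n (mexp n (mscale (\<i> * complex_of_real t) (HXY lam \<omega> n))) A)
                                (mexp n (mscale (- \<i> * complex_of_real t) (HXY lam \<omega> n)))"

definition jw :: "nat \<Rightarrow> nat \<Rightarrow> op" where
  "jw n j = foldr (\<lambda>k M. mmult n (site k pauli_z) M) [1..<j] (site j lower)"

definition LR :: "real \<Rightarrow> real \<Rightarrow> real \<Rightarrow> bool" where
  "LR lam \<omega> \<alpha> \<longleftrightarrow> (\<exists>C0 \<mu> v. C0 > 0 \<and> \<mu> > 0 \<and> v \<ge> 0 \<and>
     (\<forall>n j j' t A B. 1 \<le> j \<and> j < j' \<and> j' \<le> n \<and> t > 0 \<and>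
        A \<in> loc_alg n {j} \<and> B \<in> loc_alg n {j'..n} \<longrightarrow>
        opnorm n (comm n (tau lam \<omega> n t A) B)
          \<le> C0 * opnorm n A * opnorm n B * exp (- \<mu> * (real (j' - j) - v * t powr \<alpha>))))"

definition LR_fermi :: "real \<Rightarrow> real \<Rightarrow> real \<Rightarrow> bool" where
  "LR_fermi lam \<omega> \<alpha> \<longleftrightarrow> (\<exists>C1 \<mu> v. C1 > 0 \<and> \<mu> > 0 \<and> v \<ge> 0 \<and>
     (\<forall>n j j' t B. 1 \<le> j \<and> j < j' \<and> j' \<le> n \<and> t > 0 \<and> B \<in> loc_alg n {j'..n} \<longrightarrow>
        opnorm n (comm n (tau lam \<omega> n t (jw n j)) B)
          + opnorm n (comm n (tau lam \<omega> n t (madj (jw n j))) B)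
          \<le> C1 * opnorm n B * exp (- \<mu> * (real (j' - j) - v * t powr \<alpha>))))"

end

theory Submission
  imports Defs "HOL-Analysis.L2_Norm"
begin

(*
  Both directions rest on one estimate for the evolved commutator  X |-> ||[tau_t(X), B]||:
  since tau_t is multiplicative and norm-contracting, this quantity is subadditive along
  products of contractions ("Leibniz bound").  A string sigma^z_1 ... sigma^z_(j-1) M is then
  controlled by the sum of the bounds of its factors, and if these decay like e^(-mu (j'-k))
  the sum is a geometric series, dominated by a multiple of the bound for site j.
    LR ==> LR_fermi:  c_j is exactly such a string with M = a_j.
    LR_fermi ==> LR:  sigma^z_k = 1 - 2 c_k c_k^*, so the sigma^z-factors are controlled by the
      fermions; a_j = sigma^z_1 ... sigma^z_(j-1) c_j is again a string; finally every A in the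
      single-site algebra A_{j} is a combination of a_j, a_j^*, a_j a_j^* and 1 - a_j a_j^*.
*)

section \<open>Matrices indexed by basis configurations\<close>

text \<open>Only entries indexed by configurations, i.e. subsets of {1..n}, are meaningful;
  two matrices are identified when they agree there.\<close>

abbreviation Cfg :: "nat \<Rightarrow> nat set set" where "Cfg n \<equiv> Pow {1..n}"

definition eqv :: "nat \<Rightarrow> op \<Rightarrow> op \<Rightarrow> bool" where
  "eqv n A B \<longleftrightarrow> (\<forall>x\<in>Cfg n. \<forall>y\<in>Cfg n. A x y = B x y)"

lemma eqv_refl[simp]: "eqv n A A" by (simp add: eqv_def)
lemma eqv_sym: "eqv n A B \<Longrightarrow> eqv n B A" by (simp add: eqv_def)
lemma eqv_trans[trans]: "eqv n A B \<Longrightarrow> eqv n B C \<Longrightarrow> eqv n A C" by (simp add: eqv_def)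
lemma eq_eqv_trans[trans]: "A = B \<Longrightarrow> eqv n B C \<Longrightarrow> eqv n A C" by simp
lemma eqvD: "eqv n A B \<Longrightarrow> x \<in> Cfg n \<Longrightarrow> y \<in> Cfg n \<Longrightarrow> A x y = B x y" by (simp add: eqv_def)

lemma mmult_cong: "eqv n A A' \<Longrightarrow> eqv n B B' \<Longrightarrow> eqv n (mmult n A B) (mmult n A' B')"
  unfolding eqv_def mmult_def by (auto intro!: sum.cong)
lemma madd_cong: "eqv n A A' \<Longrightarrow> eqv n B B' \<Longrightarrow> eqv n (madd A B) (madd A' B')"
  unfolding eqv_def madd_def by auto
lemma msub_cong: "eqv n A A' \<Longrightarrow> eqv n B B' \<Longrightarrow> eqv n (msub A B) (msub A' B')"
  unfolding eqv_def msub_def by auto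
lemma mscale_cong: "eqv n A A' \<Longrightarrow> eqv n (mscale c A) (mscale c A')"
  unfolding eqv_def mscale_def by auto
lemma madj_cong: "eqv n A A' \<Longrightarrow> eqv n (madj A) (madj A')"
  unfolding eqv_def madj_def by auto
lemma msum_cong: "(\<And>j. j \<in> S \<Longrightarrow> eqv n (F j) (G j)) \<Longrightarrow> eqv n (msum S F) (msum S G)"
  unfolding eqv_def msum_def by (auto intro!: sum.cong)
lemma comm_cong: "eqv n A A' \<Longrightarrow> eqv n B B' \<Longrightarrow> eqv n (comm n A B) (comm n A' B')"
  unfolding comm_def by (intro msub_cong mmult_cong)

lemma mmult_assoc: "mmult n (mmult n A B) C = mmult n A (mmult n B C)"
  unfolding mmult_def
  by (auto simp: sum_distrib_left sum_distrib_right mult.assoc intro!: ext sum.swap[THEN trans])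

lemma mmult_mid_left: "eqv n (mmult n (mid n) A) A"
proof -
  have "(\<Sum>z\<in>Cfg n. (if x = z then 1 else 0) * A z y) = A x y" if "x \<in> Cfg n" for x y
    using that by (simp add: if_distrib[of "\<lambda>u. u * A _ y"] sum.delta cong: if_cong)
  then show ?thesis unfolding eqv_def mmult_def mid_def by auto
qed

lemma mmult_mid_right: "eqv n (mmult n A (mid n)) A"
proof -
  have "(\<Sum>z\<in>Cfg n. A x z * (if z = y then 1 else 0)) = A x y" if "y \<in> Cfg n" for x y
    using that by (simp add: if_distrib[of "\<lambda>u. A x _ * u"] sum.delta' cong: if_cong)
  then show ?thesis unfolding eqv_def mmult_def mid_def by auto
qed

lemma madj_mmult: "madj (mmult n A B) = mmult n (madj B) (madj A)"
  unfolding madj_def mmult_def by (auto simp: mult.commute intro!: ext)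
lemma madj_mid[simp]: "madj (mid n) = mid n" unfolding madj_def mid_def by (auto intro!: ext)
lemma madj_madd: "madj (madd A B) = madd (madj A) (madj B)" unfolding madj_def madd_def by auto
lemma madj_mscale: "madj (mscale c A) = mscale (cnj c) (madj A)" unfolding madj_def mscale_def by auto
lemma madj_msum: "madj (msum S F) = msum S (\<lambda>j. madj (F j))" unfolding madj_def msum_def by auto

lemma mmult_madd_left: "mmult n (madd A B) C = madd (mmult n A C) (mmult n B C)"
  unfolding mmult_def madd_def by (auto simp: distrib_right sum.distrib intro!: ext)
lemma mmult_madd_right: "mmult n C (madd A B) = madd (mmult n C A) (mmult n C B)"
  unfolding mmult_def madd_def by (auto simp: distrib_left sum.distrib intro!: ext)
lemma mmult_msub_left: "mmult n (msub A B) C = msub (mmult n A C) (mmult n B C)"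
  unfolding mmult_def msub_def by (auto simp: left_diff_distrib sum_subtractf intro!: ext)
lemma mmult_msub_right: "mmult n C (msub A B) = msub (mmult n C A) (mmult n C B)"
  unfolding mmult_def msub_def by (auto simp: right_diff_distrib sum_subtractf intro!: ext)
lemma mmult_mscale_left: "mmult n (mscale c A) B = mscale c (mmult n A B)"
  unfolding mmult_def mscale_def by (auto simp: sum_distrib_left mult.assoc intro!: ext)
lemma mmult_mscale_right: "mmult n A (mscale c B) = mscale c (mmult n A B)"
  unfolding mmult_def mscale_def by (auto simp: sum_distrib_left mult.assoc mult.left_commute intro!: ext)

lemma comm_madd: "comm n (madd X Y) B = madd (comm n X B) (comm n Y B)"
  unfolding comm_def mmult_madd_left mmult_madd_right by (auto simp: madd_def msub_def intro!: ext)
lemma comm_msub: "comm n (msub X Y) B = msub (comm n X B) (comm n Y B)"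
  unfolding comm_def mmult_msub_left mmult_msub_right by (auto simp: msub_def intro!: ext)
lemma comm_mscale: "comm n (mscale c X) B = mscale c (comm n X B)"
  unfolding comm_def mmult_mscale_left mmult_mscale_right
  by (auto simp: mscale_def msub_def algebra_simps intro!: ext)

lemma comm_mmult: "comm n (mmult n X Y) B = madd (mmult n X (comm n Y B)) (mmult n (comm n X B) Y)"
  unfolding comm_def mmult_msub_left mmult_msub_right mmult_assoc
  by (auto simp: msub_def madd_def intro!: ext)

lemma mpow_mscale: "mpow n (mscale c A) k = mscale (c ^ k) (mpow n A k)"
proof (induction k)
  case 0 then show ?case by (simp add: mscale_def)
next
  case (Suc k)
  then show ?case by (simp add: mmult_mscale_left mmult_mscale_right) (simp add: mscale_def mult_ac)
qed

lemma mpow_add: "eqv n (mmult n (mpow n A i) (mpow n A j)) (mpow n A (i + j))"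
proof (induction i)
  case 0 then show ?case by (simp add: mmult_mid_left)
next
  case (Suc i)
  have "mmult n (mpow n A (Suc i)) (mpow n A j) = mmult n A (mmult n (mpow n A i) (mpow n A j))"
    by (simp add: mmult_assoc)
  then show ?case using mmult_cong[OF eqv_refl Suc.IH, of A] by simp
qed

lemma mpow_Suc_right: "eqv n (mmult n (mpow n A k) A) (mpow n A (Suc k))"
proof -
  have "eqv n (mmult n (mpow n A k) A) (mmult n (mpow n A k) (mpow n A 1))"
    by (rule mmult_cong[OF eqv_refl], simp add: eqv_sym[OF mmult_mid_right])
  then show ?thesis using mpow_add[of n A k 1] eqv_trans by auto
qed


section \<open>The operator norm\<close>

definition vnorm :: "nat \<Rightarrow> (nat set \<Rightarrow> complex) \<Rightarrow> real" where
  "vnorm n v = L2_set (\<lambda>y. cmod (v y)) (Cfg n)"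

definition mapply :: "nat \<Rightarrow> op \<Rightarrow> (nat set \<Rightarrow> complex) \<Rightarrow> (nat set \<Rightarrow> complex)" where
  "mapply n A v = (\<lambda>x. \<Sum>y\<in>Cfg n. A x y * v y)"

lemma opnorm_alt: "opnorm n A = Sup {vnorm n (mapply n A v) | v. vnorm n v \<le> 1}"
  unfolding opnorm_def vnorm_def mapply_def L2_set_def by simp

lemma vnorm_nonneg[simp]: "0 \<le> vnorm n v" by (simp add: vnorm_def)

lemma vnorm_ge_entry: "y \<in> Cfg n \<Longrightarrow> cmod (v y) \<le> vnorm n v"
proof -
  assume y: "y \<in> Cfg n"
  have "(cmod (v y))\<^sup>2 \<le> (\<Sum>z\<in>Cfg n. (cmod (v z))\<^sup>2)"
    by (rule member_le_sum[OF y]) auto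
  then have "sqrt ((cmod (v y))\<^sup>2) \<le> sqrt (\<Sum>z\<in>Cfg n. (cmod (v z))\<^sup>2)"
    by (rule real_sqrt_le_mono)
  then show ?thesis by (simp add: vnorm_def L2_set_def)
qed

lemma vnorm_scale: "vnorm n (\<lambda>y. c * v y) = cmod c * vnorm n v"
  unfolding vnorm_def by (simp add: L2_set_right_distrib norm_mult)

lemma vnorm_add: "vnorm n (\<lambda>y. u y + w y) \<le> vnorm n u + vnorm n w"
proof -
  have "vnorm n (\<lambda>y. u y + w y) \<le> L2_set (\<lambda>y. cmod (u y) + cmod (w y)) (Cfg n)"
    unfolding vnorm_def by (rule L2_set_mono) (auto simp: norm_triangle_ineq)
  also have "\<dots> \<le> vnorm n u + vnorm n w" unfolding vnorm_def by (rule L2_set_triangle_ineq)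
  finally show ?thesis .
qed

lemma vnorm_cong: "(\<And>y. y \<in> Cfg n \<Longrightarrow> u y = w y) \<Longrightarrow> vnorm n u = vnorm n w"
  unfolding vnorm_def by (rule L2_set_cong) auto

lemma vnorm_sq: "(vnorm n v)\<^sup>2 = (\<Sum>y\<in>Cfg n. (cmod (v y))\<^sup>2)"
  unfolding vnorm_def L2_set_def by (simp add: sum_nonneg)

text \<open>The supremum defining opnorm is over a nonempty set bounded by the sum of all
  entries' moduli, so the usual characterisations of the operator norm hold.\<close>

lemma mapply_bdd:
  assumes "vnorm n v \<le> 1"
  shows "vnorm n (mapply n A v) \<le> (\<Sum>x\<in>Cfg n. \<Sum>y\<in>Cfg n. cmod (A x y))"
proof -
  have "vnorm n (mapply n A v) \<le> (\<Sum>x\<in>Cfg n. cmod (mapply n A v x))"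
    unfolding vnorm_def by (rule L2_set_le_sum) auto
  also have "\<dots> \<le> (\<Sum>x\<in>Cfg n. \<Sum>y\<in>Cfg n. cmod (A x y * v y))"
    unfolding mapply_def by (intro sum_mono norm_sum)
  also have "\<dots> \<le> (\<Sum>x\<in>Cfg n. \<Sum>y\<in>Cfg n. cmod (A x y))"
    using order_trans[OF vnorm_ge_entry assms]
    by (intro sum_mono) (simp add: norm_mult mult_left_le)
  finally show ?thesis .
qed

lemma opnorm_upper:
  assumes "vnorm n v \<le> 1" shows "vnorm n (mapply n A v) \<le> opnorm n A"
  unfolding opnorm_alt
proof (rule cSup_upper)
  show "vnorm n (mapply n A v) \<in> {vnorm n (mapply n A v) | v. vnorm n v \<le> 1}"
    using assms by blast
  show "bdd_above {vnorm n (mapply n A v) | v. vnorm n v \<le> 1}"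
    by (rule bdd_aboveI[where M="\<Sum>x\<in>Cfg n. \<Sum>y\<in>Cfg n. cmod (A x y)"]) (use mapply_bdd in blast)
qed

lemma vnorm_zero_vec: "vnorm n (\<lambda>_. 0) = 0" by (simp add: vnorm_def L2_set_def)

lemma opnorm_nonneg[simp]: "0 \<le> opnorm n A"
  using opnorm_upper[of n "\<lambda>_. 0" A] vnorm_nonneg[of n "mapply n A (\<lambda>_. 0)"]
  by (simp add: mapply_def vnorm_zero_vec)

lemma opnorm_least: "(\<And>v. vnorm n v \<le> 1 \<Longrightarrow> vnorm n (mapply n A v) \<le> c) \<Longrightarrow> opnorm n A \<le> c"
  unfolding opnorm_alt by (rule cSup_least) (use vnorm_zero_vec in \<open>auto intro!: exI[of _ "\<lambda>_. 0"]\<close>)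

text \<open>Homogeneity turns the unit-ball bound into the bound on all vectors.\<close>
lemma opnorm_bound: "vnorm n (mapply n A v) \<le> opnorm n A * vnorm n v"
proof (cases "vnorm n v = 0")
  case True
  then have "\<And>y. y \<in> Cfg n \<Longrightarrow> v y = 0" using vnorm_ge_entry[of _ n v] by fastforce
  then have "vnorm n (mapply n A v) = vnorm n (\<lambda>_. 0)"
    by (intro vnorm_cong) (auto simp: mapply_def)
  then show ?thesis using True vnorm_zero_vec by simp
next
  case False
  then have pos: "vnorm n v > 0" using vnorm_nonneg[of n v] by linarith
  define c where "c = complex_of_real (1 / vnorm n v)"
  have c: "cmod c = 1 / vnorm n v" using pos unfolding c_def by (simp only: norm_of_real) simp
  have "vnorm n (\<lambda>y. c * v y) \<le> 1" using pos by (simp add: vnorm_scale c)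
  from opnorm_upper[OF this, of A] have "cmod c * vnorm n (mapply n A v) \<le> opnorm n A"
    by (simp add: mapply_def sum_distrib_left mult_ac vnorm_scale flip: vnorm_scale)
  then show ?thesis using pos c by (simp add: divide_le_eq mult.commute)
qed

lemma opnorm_le: "0 \<le> c \<Longrightarrow> (\<And>v. vnorm n (mapply n A v) \<le> c * vnorm n v) \<Longrightarrow> opnorm n A \<le> c"
  by (rule opnorm_least) (auto intro: order_trans mult_left_le)

lemma opnorm_cong:
  assumes "eqv n A B" shows "opnorm n A = opnorm n B"
proof -
  have "vnorm n (mapply n A v) = vnorm n (mapply n B v)" for v
    using assms by (intro vnorm_cong) (simp add: mapply_def eqv_def)
  then show ?thesis unfolding opnorm_alt by simp
qed

lemma mapply_mmult: "mapply n (mmult n A B) v = mapply n A (mapply n B v)"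
  unfolding mapply_def mmult_def
  by (auto simp: sum_distrib_left sum_distrib_right mult_ac intro!: ext sum.swap[THEN trans])

lemma opnorm_mmult: "opnorm n (mmult n A B) \<le> opnorm n A * opnorm n B"
proof (rule opnorm_le)
  fix v
  have "vnorm n (mapply n (mmult n A B) v) \<le> opnorm n A * vnorm n (mapply n B v)"
    unfolding mapply_mmult by (rule opnorm_bound)
  also have "\<dots> \<le> opnorm n A * (opnorm n B * vnorm n v)"
    by (rule mult_left_mono[OF opnorm_bound]) simp
  finally show "vnorm n (mapply n (mmult n A B) v) \<le> opnorm n A * opnorm n B * vnorm n v"
    by (simp add: mult_ac)
qed simp

lemma opnorm_mmult_le1: "opnorm n A \<le> 1 \<Longrightarrow> opnorm n B \<le> 1 \<Longrightarrow> opnorm n (mmult n A B) \<le> 1"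
  using order_trans[OF opnorm_mmult mult_le_one] by simp

lemma opnorm_madd: "opnorm n (madd A B) \<le> opnorm n A + opnorm n B"
proof (rule opnorm_le)
  fix v
  have "vnorm n (mapply n (madd A B) v) \<le> vnorm n (mapply n A v) + vnorm n (mapply n B v)"
    unfolding mapply_def madd_def by (simp add: distrib_right sum.distrib vnorm_add)
  also have "\<dots> \<le> opnorm n A * vnorm n v + opnorm n B * vnorm n v"
    by (intro add_mono opnorm_bound)
  finally show "vnorm n (mapply n (madd A B) v) \<le> (opnorm n A + opnorm n B) * vnorm n v"
    by (simp add: algebra_simps)
qed simp

lemma opnorm_mscale: "opnorm n (mscale c A) \<le> cmod c * opnorm n A"
proof (rule opnorm_le)
  fix v
  have "vnorm n (mapply n (mscale c A) v) = cmod c * vnorm n (mapply n A v)"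
    unfolding mapply_def mscale_def by (simp add: sum_distrib_left mult_ac flip: vnorm_scale)
  also have "\<dots> \<le> cmod c * (opnorm n A * vnorm n v)" by (intro mult_left_mono opnorm_bound) simp
  finally show "vnorm n (mapply n (mscale c A) v) \<le> cmod c * opnorm n A * vnorm n v"
    by (simp add: mult_ac)
qed simp

lemma opnorm_msub: "opnorm n (msub A B) \<le> opnorm n A + opnorm n B"
proof -
  have "msub A B = madd A (mscale (-1) B)" by (simp add: msub_def madd_def mscale_def)
  then show ?thesis using opnorm_madd[of n A "mscale (-1) B"] opnorm_mscale[of n "-1" B] by simp
qed

lemma opnorm_entry: "x \<in> Cfg n \<Longrightarrow> y \<in> Cfg n \<Longrightarrow> cmod (A x y) \<le> opnorm n A"
proof -
  assume x: "x \<in> Cfg n" and y: "y \<in> Cfg n"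
  define v where "v = (\<lambda>z. if z = y then (1::complex) else 0)"
  have "vnorm n v = 1" using y unfolding vnorm_def L2_set_def v_def
    by (simp add: if_distrib[of "\<lambda>u. (cmod u)\<^sup>2"] cong: if_cong)
  then have "vnorm n (mapply n A v) \<le> opnorm n A" by (intro opnorm_upper) simp
  moreover have "mapply n A v x = A x y" using y unfolding mapply_def v_def
    by (simp add: if_distrib[of "\<lambda>u. A x _ * u"] cong: if_cong)
  ultimately show ?thesis using vnorm_ge_entry[OF x, of "mapply n A v"] by simp
qed

lemma gram_form:
  "complex_of_real ((vnorm n (mapply n A v))\<^sup>2) =
     (\<Sum>y\<in>Cfg n. \<Sum>z\<in>Cfg n. cnj (v y) * v z * mmult n (madj A) A y z)"
proof -
  have sq: "complex_of_real ((vnorm n w)\<^sup>2) = (\<Sum>y\<in>Cfg n. w y * cnj (w y))" for w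
    unfolding vnorm_sq of_real_sum complex_norm_square by simp
  have "complex_of_real ((vnorm n (mapply n A v))\<^sup>2) =
        (\<Sum>x\<in>Cfg n. (\<Sum>z\<in>Cfg n. A x z * v z) * (\<Sum>y\<in>Cfg n. cnj (A x y) * cnj (v y)))"
    unfolding sq mapply_def by (simp add: cnj_sum)
  also have "\<dots> = (\<Sum>x\<in>Cfg n. \<Sum>z\<in>Cfg n. \<Sum>y\<in>Cfg n. cnj (v y) * v z * (cnj (A x y) * A x z))"
    by (simp add: sum_product mult_ac)
  also have "\<dots> = (\<Sum>z\<in>Cfg n. \<Sum>x\<in>Cfg n. \<Sum>y\<in>Cfg n. cnj (v y) * v z * (cnj (A x y) * A x z))"
    by (rule sum.swap)
  also have "\<dots> = (\<Sum>z\<in>Cfg n. \<Sum>y\<in>Cfg n. \<Sum>x\<in>Cfg n. cnj (v y) * v z * (cnj (A x y) * A x z))"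
    by (rule sum.cong[OF refl], rule sum.swap)
  also have "\<dots> = (\<Sum>y\<in>Cfg n. \<Sum>z\<in>Cfg n. \<Sum>x\<in>Cfg n. cnj (v y) * v z * (cnj (A x y) * A x z))"
    by (rule sum.swap)
  also have "\<dots> = (\<Sum>y\<in>Cfg n. \<Sum>z\<in>Cfg n. cnj (v y) * v z * mmult n (madj A) A y z)"
    unfolding mmult_def madj_def by (simp add: sum_distrib_left)
  finally show ?thesis .
qed

lemma opnorm_diag_gram_le1:
  assumes e: "eqv n (mmult n (madj A) A) D"
    and d: "\<And>x y. x \<in> Cfg n \<Longrightarrow> y \<in> Cfg n \<Longrightarrow> D x y = (if x = y then complex_of_real (d x) else 0)"
    and d01: "\<And>x. x \<in> Cfg n \<Longrightarrow> 0 \<le> d x \<and> d x \<le> 1"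
  shows "opnorm n A \<le> 1"
proof (rule opnorm_le)
  fix v
  have "complex_of_real ((vnorm n (mapply n A v))\<^sup>2) =
     (\<Sum>y\<in>Cfg n. \<Sum>z\<in>Cfg n. cnj (v y) * v z * (if y = z then complex_of_real (d y) else 0))"
    unfolding gram_form using eqvD[OF e] d by (intro sum.cong refl) auto
  also have "\<dots> = (\<Sum>y\<in>Cfg n. cnj (v y) * v y * complex_of_real (d y))"
    by (intro sum.cong refl) (simp add: if_distrib[of "\<lambda>u. _ * u"] sum.delta cong: if_cong)
  also have "\<dots> = complex_of_real (\<Sum>y\<in>Cfg n. d y * (cmod (v y))\<^sup>2)"
    unfolding of_real_sum of_real_mult complex_norm_square by (intro sum.cong refl) (simp add: mult_ac)
  finally have "(vnorm n (mapply n A v))\<^sup>2 = (\<Sum>y\<in>Cfg n. d y * (cmod (v y))\<^sup>2)"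
    by (simp only: of_real_eq_iff)
  also have "\<dots> \<le> (vnorm n v)\<^sup>2"
    unfolding vnorm_sq by (intro sum_mono) (auto simp: d01 mult_left_le_one_le)
  finally show "vnorm n (mapply n A v) \<le> 1 * vnorm n v" by (simp add: power_mono_iff)
qed simp


section \<open>The matrix exponential and unitary time evolution\<close>

lemma mexp_scale: "mexp n (mscale c H) x y = (\<Sum>k. c ^ k * mpow n H k x y / fact k)"
  unfolding mexp_def mpow_mscale by (simp add: mscale_def)

text \<open>Entries of powers grow at most geometrically, so the exponential series converges
  absolutely entrywise.\<close>

lemma mpow_entry_bound:
  assumes "x \<in> Cfg n" "y \<in> Cfg n"
  shows "cmod (mpow n H k x y) \<le> (\<Sum>x\<in>Cfg n. \<Sum>y\<in>Cfg n. cmod (H x y)) ^ k"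
  using assms(1)
proof (induction k arbitrary: x)
  case 0 then show ?case by (simp add: mid_def)
next
  case (Suc k)
  let ?S = "\<Sum>x\<in>Cfg n. \<Sum>y\<in>Cfg n. cmod (H x y)"
  have S: "0 \<le> ?S" by (simp add: sum_nonneg)
  have "cmod (mpow n H (Suc k) x y) \<le> (\<Sum>z\<in>Cfg n. cmod (H x z) * cmod (mpow n H k z y))"
    unfolding mpow.simps mmult_def norm_mult[symmetric] by (rule norm_sum)
  also have "\<dots> \<le> (\<Sum>z\<in>Cfg n. cmod (H x z)) * ?S ^ k"
    unfolding sum_distrib_right by (intro sum_mono mult_left_mono Suc.IH) simp_all
  also have "\<dots> \<le> ?S * ?S ^ k"
    using Suc.prems S
    by (intro mult_right_mono member_le_sum[where f="\<lambda>x. \<Sum>z\<in>Cfg n. cmod (H x z)"])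
       (simp_all add: sum_nonneg)
  finally show ?case by simp
qed

lemma exp_term_summable:
  assumes "x \<in> Cfg n" "y \<in> Cfg n"
  shows "summable (\<lambda>k. norm (c ^ k * mpow n H k x y / fact k))"
proof (rule summable_comparison_test'[where N=0])
  let ?S = "\<Sum>x\<in>Cfg n. \<Sum>y\<in>Cfg n. cmod (H x y)"
  show "summable (\<lambda>k. inverse (fact k) * (cmod c * ?S) ^ k)" by (rule summable_exp)
  fix k :: nat
  have "norm (norm (c ^ k * mpow n H k x y / fact k)) = cmod c ^ k * cmod (mpow n H k x y) / fact k"
    by (simp add: norm_mult norm_divide norm_power)
  also have "\<dots> \<le> cmod c ^ k * ?S ^ k / fact k"
    by (intro divide_right_mono mult_left_mono mpow_entry_bound assms) simp_all
  finally show "norm (norm (c ^ k * mpow n H k x y / fact k)) \<le> inverse (fact k) * (cmod c * ?S) ^ k"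
    by (simp add: power_mult_distrib divide_inverse mult_ac)
qed

lemma binomial_fact_sum:
  "(\<Sum>i\<le>N. c ^ i * d ^ (N - i) / (fact i * fact (N - i))) = (c + d) ^ N / (fact N :: complex)"
proof -
  have "(c + d) ^ N = (\<Sum>i\<le>N. of_nat (N choose i) * c ^ i * d ^ (N - i))" by (rule binomial_ring)
  also have "\<dots> = (\<Sum>i\<le>N. fact N * (c ^ i * d ^ (N - i) / (fact i * fact (N - i))))"
    by (intro sum.cong refl) (simp add: binomial_fact)
  also have "\<dots> = fact N * (\<Sum>i\<le>N. c ^ i * d ^ (N - i) / (fact i * fact (N - i)))"
    by (simp add: sum_distrib_left)
  finally show ?thesis by (simp add: field_simps)
qed

text \<open>The functional equation e^(cH) e^(dH) = e^((c+d)H), via the Cauchy product of the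
  entrywise series and the binomial theorem.\<close>
lemma mexp_mult:
  "eqv n (mmult n (mexp n (mscale c H)) (mexp n (mscale d H))) (mexp n (mscale (c + d) H))"
  unfolding eqv_def
proof (intro ballI)
  fix x y assume x: "x \<in> Cfg n" and y: "y \<in> Cfg n"
  let ?a = "\<lambda>z k. c ^ k * mpow n H k x z / fact k"
  let ?b = "\<lambda>z k. d ^ k * mpow n H k z y / fact k"
  have series_term: "(\<Sum>z\<in>Cfg n. \<Sum>i\<le>k. ?a z i * ?b z (k - i)) = (c + d) ^ k * mpow n H k x y / fact k" for k
  proof -
    have "(\<Sum>z\<in>Cfg n. \<Sum>i\<le>k. ?a z i * ?b z (k - i)) =
          (\<Sum>i\<le>k. c ^ i * d ^ (k - i) / (fact i * fact (k - i)) * mmult n (mpow n H i) (mpow n H (k - i)) x y)"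
      unfolding mmult_def sum_distrib_left by (subst sum.swap) (simp add: divide_inverse mult_ac)
    also have "\<dots> = (\<Sum>i\<le>k. c ^ i * d ^ (k - i) / (fact i * fact (k - i))) * mpow n H k x y"
      unfolding sum_distrib_right using eqvD[OF mpow_add x y] by (intro sum.cong refl) auto
    finally show ?thesis by (simp add: binomial_fact_sum)
  qed
  have "mmult n (mexp n (mscale c H)) (mexp n (mscale d H)) x y = (\<Sum>z\<in>Cfg n. (\<Sum>k. ?a z k) * (\<Sum>k. ?b z k))"
    unfolding mmult_def mexp_scale ..
  also have "\<dots> = (\<Sum>z\<in>Cfg n. \<Sum>k. \<Sum>i\<le>k. ?a z i * ?b z (k - i))"
    using x y by (intro sum.cong refl Cauchy_product exp_term_summable) auto
  also have "\<dots> = (\<Sum>k. \<Sum>z\<in>Cfg n. \<Sum>i\<le>k. ?a z i * ?b z (k - i))"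
    using x y by (intro suminf_sum[symmetric] summable_Cauchy_product exp_term_summable) auto
  also have "\<dots> = mexp n (mscale (c + d) H) x y" unfolding mexp_scale series_term ..
  finally show "mmult n (mexp n (mscale c H)) (mexp n (mscale d H)) x y = mexp n (mscale (c + d) H) x y" .
qed

lemma mexp_zero: "eqv n (mexp n (mscale 0 H)) (mid n)"
  unfolding eqv_def
proof (intro ballI)
  fix x y
  have "(\<Sum>k. (0::complex) ^ k * mpow n H k x y / fact k) = (\<Sum>k\<in>{0}. (0::complex) ^ k * mpow n H k x y / fact k)"
    by (rule suminf_finite) simp_all
  then show "mexp n (mscale 0 H) x y = mid n x y" unfolding mexp_scale by simp
qed

lemma madj_mpow:
  assumes h: "eqv n (madj H) H" shows "eqv n (madj (mpow n H k)) (mpow n H k)"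
proof (induction k)
  case 0 then show ?case by simp
next
  case (Suc k)
  have "madj (mpow n H (Suc k)) = mmult n (madj (mpow n H k)) (madj H)" by (simp add: madj_mmult)
  also have "eqv n \<dots> (mmult n (mpow n H k) H)" by (rule mmult_cong[OF Suc.IH h])
  also have "eqv n \<dots> (mpow n H (Suc k))" by (rule mpow_Suc_right)
  finally show ?case .
qed

lemma madj_mexp:
  assumes h: "eqv n (madj H) H"
  shows "eqv n (madj (mexp n (mscale c H))) (mexp n (mscale (cnj c) H))"
  unfolding eqv_def
proof (intro ballI)
  fix x y assume x: "x \<in> Cfg n" and y: "y \<in> Cfg n"
  define f where "f = (\<lambda>k. c ^ k * mpow n H k y x / fact k)"
  have "summable f" unfolding f_def by (rule summable_norm_cancel[OF exp_term_summable[OF y x]])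
  then have cnj_suminf: "(\<Sum>k. cnj (f k)) = cnj (suminf f)"
    by (intro sums_unique[symmetric] sums_cnj[THEN iffD2] summable_sums)
  have "cnj (f k) = cnj c ^ k * mpow n H k x y / fact k" for k
  proof -
    have "cnj (mpow n H k y x) = mpow n H k x y"
      using eqvD[OF madj_mpow[OF h, of k] x y] by (simp add: madj_def)
    moreover have "cnj (fact k :: complex) = fact k"
      by (metis complex_cnj_of_nat of_nat_fact)
    ultimately show ?thesis unfolding f_def complex_cnj_mult complex_cnj_divide complex_cnj_power by simp
  qed
  then show "madj (mexp n (mscale c H)) x y = mexp n (mscale (cnj c) H) x y"
    unfolding madj_def mexp_scale f_def[symmetric] cnj_suminf[symmetric] by simp
qed

abbreviation evol :: "nat \<Rightarrow> op \<Rightarrow> real \<Rightarrow> op" where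
  "evol n H t \<equiv> mexp n (mscale (\<i> * complex_of_real t) H)"

lemma evol_inverse: "eqv n (mmult n (evol n H s) (evol n H (- s))) (mid n)"
proof -
  have "eqv n (mmult n (evol n H s) (evol n H (- s))) (mexp n (mscale 0 H))"
    using mexp_mult[of n "\<i> * complex_of_real s" H "\<i> * complex_of_real (- s)"] by simp
  then show ?thesis using mexp_zero eqv_trans by blast
qed

lemma madj_evol: "eqv n (madj H) H \<Longrightarrow> eqv n (madj (evol n H t)) (evol n H (- t))"
  using madj_mexp[where c="\<i> * complex_of_real t" and H=H and n=n] by simp

lemma opnorm_evol:
  assumes "eqv n (madj H) H" shows "opnorm n (evol n H t) \<le> 1"
proof (rule opnorm_diag_gram_le1[where d="\<lambda>_. 1"])
  show "eqv n (mmult n (madj (evol n H t)) (evol n H t)) (mid n)"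
    using mmult_cong[OF madj_evol[OF assms] eqv_refl] evol_inverse[where s="- t" and H=H and n=n]
    by (auto intro: eqv_trans)
qed (auto simp: mid_def)


section \<open>Tensor product operators\<close>

definition id2 :: "bool \<Rightarrow> bool \<Rightarrow> complex" where "id2 a b = (if a = b then 1 else 0)"
definition mul2 :: "(bool \<Rightarrow> bool \<Rightarrow> complex) \<Rightarrow> (bool \<Rightarrow> bool \<Rightarrow> complex) \<Rightarrow> bool \<Rightarrow> bool \<Rightarrow> complex" where
  "mul2 M N = (\<lambda>a b. M a True * N True b + M a False * N False b)"
definition adj2 :: "(bool \<Rightarrow> bool \<Rightarrow> complex) \<Rightarrow> bool \<Rightarrow> bool \<Rightarrow> complex" where
  "adj2 M = (\<lambda>a b. cnj (M b a))"

definition e11 :: "bool \<Rightarrow> bool \<Rightarrow> complex" where "e11 a b = (if a \<and> b then 1 else 0)"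

lemma bool_ext2: "(\<And>a b. M a b = N a b) \<Longrightarrow> M = N" by (auto intro!: ext)

lemma mul2_id_left[simp]: "mul2 id2 M = M" unfolding mul2_def id2_def by (intro bool_ext2) auto
lemma mul2_id_right[simp]: "mul2 M id2 = M" unfolding mul2_def id2_def by (intro bool_ext2) auto
lemma mul2_zz[simp]: "mul2 pauli_z pauli_z = id2"
  unfolding mul2_def id2_def pauli_z_def by (intro bool_ext2) auto
lemma adj2_z[simp]: "adj2 pauli_z = pauli_z" unfolding adj2_def pauli_z_def by (intro bool_ext2) auto
lemma adj2_x[simp]: "adj2 pauli_x = pauli_x" unfolding adj2_def pauli_x_def by (intro bool_ext2) auto
lemma adj2_y[simp]: "adj2 pauli_y = pauli_y" unfolding adj2_def pauli_y_def by (intro bool_ext2) auto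
lemma adj2_id[simp]: "adj2 id2 = id2" unfolding adj2_def id2_def by (intro bool_ext2) auto
lemma mul2_lower_adj: "mul2 lower (adj2 lower) = e11"
  unfolding mul2_def adj2_def lower_def e11_def pauli_x_def pauli_y_def by (intro bool_ext2) auto

definition tensor_prod :: "nat \<Rightarrow> (nat \<Rightarrow> bool \<Rightarrow> bool \<Rightarrow> complex) \<Rightarrow> op" where
  "tensor_prod n F = (\<lambda>x y. \<Prod>k\<in>{1..n}. F k (k \<in> x) (k \<in> y))"

lemma madj_site: "madj (site j M) = site j (adj2 M)"
  unfolding madj_def site_def adj2_def by (auto intro!: ext)

lemma madj_tensor_prod: "madj (tensor_prod n F) = tensor_prod n (\<lambda>k. adj2 (F k))"
  unfolding madj_def tensor_prod_def adj2_def by (auto simp: cnj_prod intro!: ext)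

lemma prod_split_subset:
  assumes "finite S" "X \<subseteq> S"
  shows "(\<Prod>k\<in>S. h k (k \<in> X)) = (\<Prod>k\<in>X. h k True) * (\<Prod>k\<in>S - X. h k False)"
proof -
  have "(\<Prod>k\<in>S. h k (k \<in> X)) = (\<Prod>k\<in>X. h k (k \<in> X)) * (\<Prod>k\<in>S - X. h k (k \<in> X))"
    using assms by (metis prod.subset_diff mult.commute)
  also have "\<dots> = (\<Prod>k\<in>X. h k True) * (\<Prod>k\<in>S - X. h k False)"
    by (intro arg_cong2[where f="(*)"] prod.cong) auto
  finally show ?thesis .
qed

text \<open>Tensor products multiply factorwise: summing over configurations z is the same as
  expanding the product of the two-term sums.\<close>
lemma mmult_tensor_prod:
  "mmult n (tensor_prod n F) (tensor_prod n G) = tensor_prod n (\<lambda>k. mul2 (F k) (G k))"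
proof (intro ext)
  fix x y
  let ?h = "\<lambda>k b. F k (k \<in> x) b * G k b (k \<in> y)"
  have "mmult n (tensor_prod n F) (tensor_prod n G) x y = (\<Sum>z\<in>Cfg n. \<Prod>k\<in>{1..n}. ?h k (k \<in> z))"
    unfolding mmult_def tensor_prod_def by (simp add: prod.distrib)
  also have "\<dots> = (\<Sum>z\<in>Cfg n. (\<Prod>k\<in>z. ?h k True) * (\<Prod>k\<in>{1..n} - z. ?h k False))"
    by (intro sum.cong refl prod_split_subset) auto
  also have "\<dots> = (\<Prod>k\<in>{1..n}. ?h k True + ?h k False)"
    by (rule prod_add[symmetric]) simp
  finally show "mmult n (tensor_prod n F) (tensor_prod n G) x y = tensor_prod n (\<lambda>k. mul2 (F k) (G k)) x y"
    unfolding tensor_prod_def mul2_def by simp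
qed

lemma prod_id2: "finite S \<Longrightarrow> (\<Prod>k\<in>S. id2 (P k) (Q k)) = (if \<forall>k\<in>S. P k = Q k then 1 else 0)"
  by (induction S rule: finite_induct) (auto simp: id2_def)

lemma site_tensor_prod:
  assumes j: "j \<in> {1..n}"
  shows "eqv n (site j M) (tensor_prod n ((\<lambda>k. id2)(j := M)))"
  unfolding eqv_def
proof (intro ballI)
  fix x y assume x: "x \<in> Cfg n" and y: "y \<in> Cfg n"
  have "tensor_prod n ((\<lambda>k. id2)(j := M)) x y =
        M (j \<in> x) (j \<in> y) * (\<Prod>k\<in>{1..n} - {j}. id2 (k \<in> x) (k \<in> y))"
    unfolding tensor_prod_def using j by (simp add: prod.remove)
  also have "(\<Prod>k\<in>{1..n} - {j}. id2 (k \<in> x) (k \<in> y)) = (if x - {j} = y - {j} then 1 else 0)"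
    using x y by (subst prod_id2) auto
  finally have eq: "tensor_prod n ((\<lambda>k. id2)(j := M)) x y = M (j \<in> x) (j \<in> y) * (if x - {j} = y - {j} then 1 else 0)" .
  show "site j M x y = tensor_prod n ((\<lambda>k. id2)(j := M)) x y"
    unfolding site_def eq by simp
qed

lemma site_mmult_tensor_prod:
  assumes j: "j \<in> {1..n}"
  shows "eqv n (mmult n (site j M) (tensor_prod n F)) (tensor_prod n (F(j := mul2 M (F j))))"
proof -
  have "eqv n (mmult n (site j M) (tensor_prod n F)) (mmult n (tensor_prod n ((\<lambda>k. id2)(j := M))) (tensor_prod n F))"
    by (intro mmult_cong site_tensor_prod j eqv_refl)
  also have "\<dots> = tensor_prod n (F(j := mul2 M (F j)))"
    unfolding mmult_tensor_prod by (intro arg_cong[where f="tensor_prod n"] ext) auto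
  finally show ?thesis .
qed

lemma site_comm:
  assumes j: "j \<in> {1..n}" and k: "k \<in> {1..n}" and jk: "j \<noteq> k"
  shows "eqv n (mmult n (site j M) (site k N)) (mmult n (site k N) (site j M))"
proof -
  have two_sites: "eqv n (mmult n (site a P) (site b Q)) (tensor_prod n ((\<lambda>i. id2)(a := P, b := Q)))"
    if "a \<in> {1..n}" "b \<in> {1..n}" "a \<noteq> b" for a b P Q
  proof -
    have "eqv n (mmult n (site a P) (site b Q)) (mmult n (site a P) (tensor_prod n ((\<lambda>i. id2)(b := Q))))"
      using that by (intro mmult_cong eqv_refl site_tensor_prod)
    also have "eqv n \<dots> (tensor_prod n ((\<lambda>i. id2)(b := Q, a := P)))"
      using site_mmult_tensor_prod[OF that(1), of P "(\<lambda>i. id2)(b := Q)"] that(3) by simp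
    finally show ?thesis using that(3) by (simp add: fun_upd_twist)
  qed
  show ?thesis using two_sites[OF j k jk, of M N] two_sites[OF k j jk[symmetric], of N M] jk
    by (metis eqv_sym eqv_trans fun_upd_twist)
qed

abbreviation zstring :: "nat \<Rightarrow> nat list \<Rightarrow> op \<Rightarrow> op" where
  "zstring n ks M \<equiv> foldr (\<lambda>k M. mmult n (site k pauli_z) M) ks M"

lemma zstring_tensor_prod:
  assumes "distinct ks" "set ks \<subseteq> {1..n}" "eqv n B (tensor_prod n G)"
  shows "eqv n (zstring n ks B) (tensor_prod n (\<lambda>k. if k \<in> set ks then mul2 pauli_z (G k) else G k))"
  using assms
proof (induction ks)
  case Nil then show ?case by simp
next
  case (Cons k ks)
  let ?G = "\<lambda>k. if k \<in> set ks then mul2 pauli_z (G k) else G k"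
  have "eqv n (zstring n (k # ks) B) (mmult n (site k pauli_z) (tensor_prod n ?G))"
    using Cons by (simp add: mmult_cong)
  also have "eqv n \<dots> (tensor_prod n (?G(k := mul2 pauli_z (G k))))"
    using site_mmult_tensor_prod[of k n pauli_z ?G] Cons.prems by simp
  also have "?G(k := mul2 pauli_z (G k)) = (\<lambda>i. if i \<in> set (k # ks) then mul2 pauli_z (G i) else G i)"
    by auto
  finally show ?case .
qed

lemma zstring_upt_tensor_prod:
  assumes "j \<le> n" "eqv n B (tensor_prod n G)"
  shows "eqv n (zstring n [1..<j] B) (tensor_prod n (\<lambda>k. if k \<in> {1..<j} then mul2 pauli_z (G k) else G k))"
proof -
  have "set [1..<j] \<subseteq> {1..n}" using assms by auto
  from zstring_tensor_prod[OF distinct_upt this assms(2)] show ?thesis by simp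
qed

definition jw_factor :: "nat \<Rightarrow> nat \<Rightarrow> bool \<Rightarrow> bool \<Rightarrow> complex" where
  "jw_factor j = (\<lambda>k. if k \<in> {1..<j} then pauli_z else if k = j then lower else id2)"

lemma jw_tensor_prod:
  assumes "1 \<le> j" "j \<le> n"
  shows "eqv n (jw n j) (tensor_prod n (jw_factor j))"
proof -
  have "eqv n (jw n j) (tensor_prod n (\<lambda>k. if k \<in> {1..<j} then mul2 pauli_z (((\<lambda>k. id2)(j := lower)) k) else ((\<lambda>k. id2)(j := lower)) k))"
    unfolding jw_def using assms by (intro zstring_upt_tensor_prod site_tensor_prod) auto
  also have "(\<lambda>k. if k \<in> {1..<j} then mul2 pauli_z (((\<lambda>k. id2)(j := lower)) k) else ((\<lambda>k. id2)(j := lower)) k) = jw_factor j"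
    unfolding jw_factor_def by (auto intro!: ext)
  finally show ?thesis .
qed

text \<open>Inverting the Jordan-Wigner transformation: a_j = sigma^z_1 ... sigma^z_(j-1) c_j,
  because sigma^z squares to the identity.\<close>
lemma lower_via_jw:
  assumes "1 \<le> j" "j \<le> n"
  shows "eqv n (site j lower) (zstring n [1..<j] (jw n j))"
proof -
  have "eqv n (zstring n [1..<j] (jw n j))
      (tensor_prod n (\<lambda>k. if k \<in> {1..<j} then mul2 pauli_z (jw_factor j k) else jw_factor j k))"
    using assms by (intro zstring_upt_tensor_prod jw_tensor_prod)
  also have "(\<lambda>k. if k \<in> {1..<j} then mul2 pauli_z (jw_factor j k) else jw_factor j k) = (\<lambda>k. id2)(j := lower)"
    unfolding jw_factor_def by (auto intro!: ext)
  finally have "eqv n (zstring n [1..<j] (jw n j)) (tensor_prod n ((\<lambda>k. id2)(j := lower)))" .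
  then show ?thesis using assms site_tensor_prod[of j n lower] by (auto intro: eqv_trans eqv_sym)
qed

lemma tensor_prod_mmult_adj:
  assumes k: "k \<in> {1..n}" and Fk: "mul2 (F k) (adj2 (F k)) = e11"
    and F: "\<And>i. i \<noteq> k \<Longrightarrow> mul2 (F i) (adj2 (F i)) = id2"
  shows "eqv n (mmult n (tensor_prod n F) (madj (tensor_prod n F))) (site k e11)"
proof -
  have "mmult n (tensor_prod n F) (madj (tensor_prod n F)) = tensor_prod n ((\<lambda>i. id2)(k := e11))"
    unfolding madj_tensor_prod mmult_tensor_prod using Fk F
    by (intro arg_cong[where f="tensor_prod n"] ext) auto
  then show ?thesis using site_tensor_prod[OF k, of e11] by (simp add: eqv_sym)
qed

lemma jw_mmult_adj:
  assumes "1 \<le> k" "k \<le> n"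
  shows "eqv n (mmult n (jw n k) (madj (jw n k))) (site k e11)"
proof -
  have "eqv n (mmult n (jw n k) (madj (jw n k))) (mmult n (tensor_prod n (jw_factor k)) (madj (tensor_prod n (jw_factor k))))"
    using assms by (intro mmult_cong madj_cong jw_tensor_prod)
  also have "eqv n \<dots> (site k e11)"
    using assms by (intro tensor_prod_mmult_adj) (auto simp: jw_factor_def mul2_lower_adj)
  finally show ?thesis .
qed

lemma lower_mmult_adj:
  assumes "k \<in> {1..n}"
  shows "eqv n (mmult n (site k lower) (madj (site k lower))) (site k e11)"
proof -
  have "eqv n (mmult n (site k lower) (madj (site k lower)))
     (mmult n (tensor_prod n ((\<lambda>i. id2)(k := lower))) (madj (tensor_prod n ((\<lambda>i. id2)(k := lower)))))"
    using assms by (intro mmult_cong madj_cong site_tensor_prod)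
  also have "eqv n \<dots> (site k e11)"
    using assms by (intro tensor_prod_mmult_adj) (auto simp: mul2_lower_adj)
  finally show ?thesis .
qed

lemma z_via_e11: "eqv n (site k pauli_z) (msub (mid n) (mscale 2 (site k e11)))"
  unfolding eqv_def site_def msub_def mscale_def mid_def pauli_z_def e11_def by auto

text \<open>Norm bounds.  A 2x2 matrix with orthogonal columns of norm at most 1 has norm at most 1,
  and so does any tensor product of such matrices: its Gram matrix is diagonal with
  entries in [0,1].\<close>

definition col_contr2 :: "(bool \<Rightarrow> bool \<Rightarrow> complex) \<Rightarrow> bool" where
  "col_contr2 M \<longleftrightarrow> mul2 (adj2 M) M True False = 0 \<and> mul2 (adj2 M) M False True = 0 \<and>
     (cmod (M True True))\<^sup>2 + (cmod (M False True))\<^sup>2 \<le> 1 \<and>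
     (cmod (M True False))\<^sup>2 + (cmod (M False False))\<^sup>2 \<le> 1"

lemma mul2_adj_diag: "mul2 (adj2 M) M a a = complex_of_real ((cmod (M True a))\<^sup>2 + (cmod (M False a))\<^sup>2)"
  unfolding mul2_def adj2_def of_real_add complex_norm_square by (simp add: mult.commute)

lemma opnorm_tensor_prod:
  assumes g: "\<And>k. k \<in> {1..n} \<Longrightarrow> col_contr2 (F k)"
  shows "opnorm n (tensor_prod n F) \<le> 1"
proof -
  let ?G = "\<lambda>k. mul2 (adj2 (F k)) (F k)"
  let ?r = "\<lambda>k a. (cmod (F k True a))\<^sup>2 + (cmod (F k False a))\<^sup>2"
  have gram: "mmult n (madj (tensor_prod n F)) (tensor_prod n F) = tensor_prod n ?G"
    unfolding madj_tensor_prod mmult_tensor_prod ..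
  show ?thesis
  proof (rule opnorm_diag_gram_le1[OF gram[THEN eq_eqv_trans, OF eqv_refl], where d="\<lambda>x. \<Prod>k\<in>{1..n}. ?r k (k \<in> x)"])
    fix x y assume x: "x \<in> Cfg n" and y: "y \<in> Cfg n"
    show "tensor_prod n ?G x y = (if x = y then complex_of_real (\<Prod>k\<in>{1..n}. ?r k (k \<in> x)) else 0)"
    proof (cases "x = y")
      case True
      then show ?thesis
        by (simp add: tensor_prod_def mul2_adj_diag of_real_prod del: of_real_add of_real_power)
    next
      case False
      then obtain k where k: "k \<in> {1..n}" "(k \<in> x) \<noteq> (k \<in> y)" using x y by blast
      have "?G k (k \<in> x) (k \<in> y) = 0" using g[OF k(1)] k(2) unfolding col_contr2_def
        by (cases "k \<in> x") auto
      then have "tensor_prod n ?G x y = 0" unfolding tensor_prod_def using k(1) by (intro prod_zero) auto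
      then show ?thesis using False by simp
    qed
  next
    fix x
    have "?r k b \<le> 1" if "k \<in> {1..n}" for k b using g[OF that] unfolding col_contr2_def by (cases b) auto
    then show "0 \<le> (\<Prod>k\<in>{1..n}. ?r k (k \<in> x)) \<and> (\<Prod>k\<in>{1..n}. ?r k (k \<in> x)) \<le> 1"
      by (auto intro!: prod_nonneg prod_le_1)
  qed
qed

lemma col_contr2_id: "col_contr2 id2" unfolding col_contr2_def mul2_def adj2_def id2_def by simp
lemma col_contr2_z: "col_contr2 pauli_z" unfolding col_contr2_def mul2_def adj2_def pauli_z_def by simp
lemma col_contr2_lower: "col_contr2 lower"
  unfolding col_contr2_def mul2_def adj2_def lower_def pauli_x_def pauli_y_def by simp
lemma col_contr2_lower_adj: "col_contr2 (adj2 lower)"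
  unfolding col_contr2_def mul2_def adj2_def lower_def pauli_x_def pauli_y_def by simp

lemma opnorm_site: "k \<in> {1..n} \<Longrightarrow> col_contr2 M \<Longrightarrow> opnorm n (site k M) \<le> 1"
  using opnorm_tensor_prod[of n "(\<lambda>k. id2)(k := M)"] opnorm_cong[OF site_tensor_prod[of k n M]] col_contr2_id
  by auto

lemma opnorm_jw:
  assumes "1 \<le> j" "j \<le> n"
  shows "opnorm n (jw n j) \<le> 1" and "opnorm n (madj (jw n j)) \<le> 1"
proof -
  have "col_contr2 (jw_factor j k)" "col_contr2 (adj2 (jw_factor j k))" for k
    unfolding jw_factor_def using col_contr2_z col_contr2_lower col_contr2_lower_adj col_contr2_id by auto
  then show "opnorm n (jw n j) \<le> 1" "opnorm n (madj (jw n j)) \<le> 1"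
    using opnorm_cong[OF jw_tensor_prod[OF assms]] opnorm_cong[OF madj_cong[OF jw_tensor_prod[OF assms]]]
      opnorm_tensor_prod[of n "jw_factor j"] opnorm_tensor_prod[of n "\<lambda>k. adj2 (jw_factor j k)"]
    by (auto simp: madj_tensor_prod)
qed

lemma site_loc: "site j M \<in> loc_alg n {j}"
  unfolding loc_alg_def site_def
  by (rule CollectI, rule exI[where x="\<lambda>a b. M (j \<in> a) (j \<in> b)"]) auto

lemma loc_decomp:
  assumes A: "A \<in> loc_alg n {j}" and j: "j \<in> {1..n}"
  defines "\<alpha> \<equiv> \<lambda>a b. A (if a then {j} else {}) (if b then {j} else {})"
  shows "eqv n A (madd (madd (mscale (\<alpha> True False) (site j lower)) (mscale (\<alpha> False True) (madj (site j lower))))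
                       (madd (mscale (\<alpha> True True) (site j e11)) (mscale (\<alpha> False False) (msub (mid n) (site j e11)))))"
  unfolding eqv_def
proof (intro ballI)
  fix x y assume x: "x \<in> Cfg n" and y: "y \<in> Cfg n"
  from A obtain f where f: "\<And>x y. x \<in> Cfg n \<Longrightarrow> y \<in> Cfg n \<Longrightarrow> A x y = (if x - {j} = y - {j} then f (x \<inter> {j}) (y \<inter> {j}) else 0)"
    unfolding loc_alg_def by blast
  have jj: "(if b then {j} else {}) \<in> Cfg n" for b using j by auto
  have al: "\<alpha> a b = f (if a then {j} else {}) (if b then {j} else {})" for a b
    using f[OF jj[of a] jj[of b]] unfolding \<alpha>_def by (cases a; cases b) auto
  have xi: "x \<inter> {j} = (if j \<in> x then {j} else {})" "y \<inter> {j} = (if j \<in> y then {j} else {})" by auto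
  have mid: "mid n x y = (if x - {j} = y - {j} \<and> (j \<in> x \<longleftrightarrow> j \<in> y) then 1 else 0)"
    unfolding mid_def by auto
  show "A x y = madd (madd (mscale (\<alpha> True False) (site j lower)) (mscale (\<alpha> False True) (madj (site j lower))))
                       (madd (mscale (\<alpha> True True) (site j e11)) (mscale (\<alpha> False False) (msub (mid n) (site j e11)))) x y"
    unfolding f[OF x y] madd_def mscale_def msub_def mid madj_site al xi
    unfolding site_def lower_def adj2_def e11_def pauli_x_def pauli_y_def
    by (cases "j \<in> x"; cases "j \<in> y") auto
qed

section \<open>The Heisenberg dynamics\<close>

text \<open>The XY Hamiltonian is Hermitian: the Pauli matrices are self-adjoint and operators
  on different sites commute.\<close>
lemma madj_HXY: "eqv n (madj (HXY lam \<omega> n)) (HXY lam \<omega> n)"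
proof -
  have "madj (HXY lam \<omega> n) = madd
     (mscale (-1) (msum {1..<n} (\<lambda>j. madd (mmult n (site (j+1) pauli_x) (site j pauli_x))
                                            (mmult n (site (j+1) pauli_y) (site j pauli_y)))))
     (msum {1..n} (\<lambda>j. mscale (complex_of_real (pot lam \<omega> j)) (site j pauli_z)))"
    unfolding HXY_def madj_madd madj_mscale madj_msum madj_mmult madj_site adj2_x adj2_y adj2_z
      complex_cnj_complex_of_real complex_cnj_minus complex_cnj_one ..
  also have "eqv n \<dots> (HXY lam \<omega> n)"
    unfolding HXY_def
  proof (rule madd_cong[OF mscale_cong[OF msum_cong] eqv_refl])
    fix j assume "j \<in> {1..<n}"
    then have j: "j + 1 \<in> {1..n}" "j \<in> {1..n}" "j + 1 \<noteq> j" by auto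
    show "eqv n (madd (mmult n (site (j+1) pauli_x) (site j pauli_x)) (mmult n (site (j+1) pauli_y) (site j pauli_y)))
                (madd (mmult n (site j pauli_x) (site (j+1) pauli_x)) (mmult n (site j pauli_y) (site (j+1) pauli_y)))"
      by (rule madd_cong; rule site_comm[OF j])
  qed
  finally show ?thesis .
qed

lemma tau_evol: "tau lam \<omega> n t X = mmult n (mmult n (evol n (HXY lam \<omega> n) t) X) (evol n (HXY lam \<omega> n) (- t))"
  unfolding tau_def by simp

text \<open>tau_t is conjugation by a unitary: it is linear, multiplicative, unital and does not
  increase norms.\<close>

lemma tau_cong: "eqv n X Y \<Longrightarrow> eqv n (tau lam \<omega> n t X) (tau lam \<omega> n t Y)"
  unfolding tau_def by (intro mmult_cong eqv_refl)

lemma tau_madd: "tau lam \<omega> n t (madd X Y) = madd (tau lam \<omega> n t X) (tau lam \<omega> n t Y)"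
  unfolding tau_def by (simp add: mmult_madd_left mmult_madd_right)
lemma tau_msub: "tau lam \<omega> n t (msub X Y) = msub (tau lam \<omega> n t X) (tau lam \<omega> n t Y)"
  unfolding tau_def by (simp add: mmult_msub_left mmult_msub_right)
lemma tau_mscale: "tau lam \<omega> n t (mscale c X) = mscale c (tau lam \<omega> n t X)"
  unfolding tau_def by (simp add: mmult_mscale_left mmult_mscale_right)

lemma tau_mmult: "eqv n (tau lam \<omega> n t (mmult n X Y)) (mmult n (tau lam \<omega> n t X) (tau lam \<omega> n t Y))"
proof -
  let ?U = "evol n (HXY lam \<omega> n) t" and ?V = "evol n (HXY lam \<omega> n) (- t)"
  have "mmult n (tau lam \<omega> n t X) (tau lam \<omega> n t Y) = mmult n ?U (mmult n X (mmult n (mmult n ?V ?U) (mmult n Y ?V)))"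
    unfolding tau_evol by (simp only: mmult_assoc)
  also have "eqv n \<dots> (mmult n ?U (mmult n X (mmult n (mid n) (mmult n Y ?V))))"
    using evol_inverse[where s="- t" and H="HXY lam \<omega> n" and n=n] by (intro mmult_cong eqv_refl) simp
  also have "eqv n \<dots> (mmult n ?U (mmult n X (mmult n Y ?V)))"
    by (intro mmult_cong eqv_refl mmult_mid_left)
  also have "\<dots> = tau lam \<omega> n t (mmult n X Y)"
    unfolding tau_evol by (simp only: mmult_assoc)
  finally show ?thesis by (rule eqv_sym)
qed

lemma tau_mid: "eqv n (tau lam \<omega> n t (mid n)) (mid n)"
proof -
  have "eqv n (tau lam \<omega> n t (mid n)) (mmult n (evol n (HXY lam \<omega> n) t) (evol n (HXY lam \<omega> n) (- t)))"
    unfolding tau_evol by (intro mmult_cong mmult_mid_right eqv_refl)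
  then show ?thesis using evol_inverse eqv_trans by blast
qed

lemma opnorm_tau: "opnorm n (tau lam \<omega> n t X) \<le> opnorm n X"
proof -
  have U: "opnorm n (evol n (HXY lam \<omega> n) s) \<le> 1" for s by (rule opnorm_evol[OF madj_HXY])
  have "opnorm n (tau lam \<omega> n t X)
        \<le> opnorm n (evol n (HXY lam \<omega> n) t) * opnorm n X * opnorm n (evol n (HXY lam \<omega> n) (- t))"
    unfolding tau_evol by (rule order_trans[OF opnorm_mmult mult_right_mono[OF opnorm_mmult]]) simp
  also have "\<dots> \<le> 1 * opnorm n X * 1"
    using U[of t] U[of "- t"] by (intro mult_mono) simp_all
  finally show ?thesis by simp
qed

abbreviation ecomm :: "real \<Rightarrow> real \<Rightarrow> nat \<Rightarrow> real \<Rightarrow> op \<Rightarrow> op \<Rightarrow> real" where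
  "ecomm lam \<omega> n t B X \<equiv> opnorm n (comm n (tau lam \<omega> n t X) B)"

lemma ecomm_cong: "eqv n X Y \<Longrightarrow> ecomm lam \<omega> n t B X = ecomm lam \<omega> n t B Y"
  by (intro opnorm_cong comm_cong tau_cong eqv_refl)

lemma ecomm_madd: "ecomm lam \<omega> n t B (madd X Y) \<le> ecomm lam \<omega> n t B X + ecomm lam \<omega> n t B Y"
  unfolding tau_madd comm_madd by (rule opnorm_madd)
lemma ecomm_msub: "ecomm lam \<omega> n t B (msub X Y) \<le> ecomm lam \<omega> n t B X + ecomm lam \<omega> n t B Y"
  unfolding tau_msub comm_msub by (rule opnorm_msub)
lemma ecomm_mscale: "ecomm lam \<omega> n t B (mscale c X) \<le> cmod c * ecomm lam \<omega> n t B X"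
  unfolding tau_mscale comm_mscale by (rule opnorm_mscale)

lemma ecomm_mid: "ecomm lam \<omega> n t B (mid n) = 0"
proof -
  have "eqv n (comm n (mid n) B) (msub B B)" unfolding comm_def
    by (rule msub_cong[OF mmult_mid_left mmult_mid_right])
  then have "eqv n (comm n (tau lam \<omega> n t (mid n)) B) (\<lambda>x y. 0)"
    using comm_cong[OF tau_mid eqv_refl] by (auto simp: eqv_def msub_def)
  then have "ecomm lam \<omega> n t B (mid n) = opnorm n (\<lambda>x y. 0)" by (rule opnorm_cong)
  also have "\<dots> \<le> 0" by (rule opnorm_le) (simp_all add: mapply_def vnorm_zero_vec)
  finally show ?thesis using opnorm_nonneg by (intro antisym) auto
qed

lemma ecomm_mmult:
  assumes "opnorm n X \<le> 1" "opnorm n Y \<le> 1"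
  shows "ecomm lam \<omega> n t B (mmult n X Y) \<le> ecomm lam \<omega> n t B X + ecomm lam \<omega> n t B Y"
proof -
  let ?X = "tau lam \<omega> n t X" and ?Y = "tau lam \<omega> n t Y"
  have "ecomm lam \<omega> n t B (mmult n X Y) = opnorm n (comm n (mmult n ?X ?Y) B)"
    by (intro opnorm_cong comm_cong tau_mmult eqv_refl)
  also have "\<dots> \<le> opnorm n ?X * opnorm n (comm n ?Y B) + opnorm n (comm n ?X B) * opnorm n ?Y"
    unfolding comm_mmult by (rule order_trans[OF opnorm_madd add_mono[OF opnorm_mmult opnorm_mmult]])
  also have "\<dots> \<le> 1 * opnorm n (comm n ?Y B) + opnorm n (comm n ?X B) * 1"
    using opnorm_tau[of n lam \<omega> t X] opnorm_tau[of n lam \<omega> t Y] assms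
    by (intro add_mono mult_right_mono mult_left_mono) auto
  finally show ?thesis by simp
qed

section \<open>Commutator estimates for sigma^z-strings\<close>

text \<open>By the Leibniz bound, the evolved commutator of a sigma^z-string is at most the sum of
  those of its factors; all strings involved remain contractions.\<close>
lemma zstring_ecomm:
  assumes ks: "set ks \<subseteq> {1..n}" and M: "opnorm n M \<le> 1" "opnorm n (madj M) \<le> 1"
  shows "opnorm n (zstring n ks M) \<le> 1 \<and> opnorm n (madj (zstring n ks M)) \<le> 1 \<and>
         ecomm lam \<omega> n t B (zstring n ks M)
            \<le> (\<Sum>k\<leftarrow>ks. ecomm lam \<omega> n t B (site k pauli_z)) + ecomm lam \<omega> n t B M \<and>
         ecomm lam \<omega> n t B (madj (zstring n ks M))
            \<le> (\<Sum>k\<leftarrow>ks. ecomm lam \<omega> n t B (site k pauli_z)) + ecomm lam \<omega> n t B (madj M)"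
  using ks
proof (induction ks)
  case Nil then show ?case using M by simp
next
  case (Cons k ks)
  let ?P = "zstring n ks M" and ?Z = "site k pauli_z"
  from Cons have IH: "opnorm n ?P \<le> 1" "opnorm n (madj ?P) \<le> 1"
    "ecomm lam \<omega> n t B ?P \<le> (\<Sum>k\<leftarrow>ks. ecomm lam \<omega> n t B (site k pauli_z)) + ecomm lam \<omega> n t B M"
    "ecomm lam \<omega> n t B (madj ?P) \<le> (\<Sum>k\<leftarrow>ks. ecomm lam \<omega> n t B (site k pauli_z)) + ecomm lam \<omega> n t B (madj M)"
    by auto
  have Z: "opnorm n ?Z \<le> 1" using Cons.prems by (intro opnorm_site col_contr2_z) auto
  have adj: "madj (mmult n ?Z ?P) = mmult n (madj ?P) ?Z" by (simp add: madj_mmult madj_site)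
  let ?S = "\<Sum>k\<leftarrow>ks. ecomm lam \<omega> n t B (site k pauli_z)"
  have "ecomm lam \<omega> n t B (mmult n ?Z ?P) \<le> ecomm lam \<omega> n t B ?Z + (?S + ecomm lam \<omega> n t B M)"
    using ecomm_mmult[OF Z IH(1), where lam=lam and \<omega>=\<omega> and t=t and B=B] IH(3) by linarith
  moreover have "ecomm lam \<omega> n t B (mmult n (madj ?P) ?Z) \<le> ecomm lam \<omega> n t B ?Z + (?S + ecomm lam \<omega> n t B (madj M))"
    using ecomm_mmult[OF IH(2) Z, where lam=lam and \<omega>=\<omega> and t=t and B=B] IH(4) by linarith
  ultimately show ?case
    using opnorm_mmult_le1[OF Z IH(1)] opnorm_mmult_le1[OF IH(2) Z] by (simp add: adj add.assoc)
qed

abbreviation decay :: "real \<Rightarrow> real \<Rightarrow> nat \<Rightarrow> nat \<Rightarrow> real" where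
  "decay \<mu> w j' k \<equiv> exp (- \<mu> * (real (j' - k) - w))"

lemma decay_sum:
  assumes mu: "0 < \<mu>" and jj: "j \<le> j'"
  shows "(\<Sum>k\<in>{1..j}. decay \<mu> w j' k) \<le> decay \<mu> w j' j / (1 - exp (- \<mu>))"
proof -
  let ?q = "exp (- \<mu>)"
  have q: "0 < ?q" "?q < 1" using mu by simp_all
  have geometric: "(\<Sum>k\<in>{1..j}. ?q ^ (j - k)) \<le> 1 / (1 - ?q)"
  proof -
    have "(\<Sum>k\<in>{1..j}. ?q ^ (j - k)) = (\<Sum>i<j. ?q ^ i)"
      unfolding One_nat_def sum.atLeast1_atMost_eq by (rule sum.nat_diff_reindex)
    also have "\<dots> = (1 - ?q ^ j) / (1 - ?q)" using q by (simp add: sum_gp_strict)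
    also have "\<dots> \<le> 1 / (1 - ?q)" using q by (intro divide_right_mono) simp_all
    finally show ?thesis .
  qed
  have "decay \<mu> w j' k = decay \<mu> w j' j * ?q ^ (j - k)" if "k \<in> {1..j}" for k
  proof -
    have "real (j' - k) = real (j' - j) + real (j - k)" using that jj by auto
    then have "- \<mu> * (real (j' - k) - w) = - \<mu> * (real (j' - j) - w) + real (j - k) * (- \<mu>)"
      by (simp add: algebra_simps)
    then show ?thesis by (simp only: exp_add exp_of_nat_mult)
  qed
  then have "(\<Sum>k\<in>{1..j}. decay \<mu> w j' k) = (\<Sum>k\<in>{1..j}. decay \<mu> w j' j * ?q ^ (j - k))"
    by (rule sum.cong[OF refl])
  also have "\<dots> = decay \<mu> w j' j * (\<Sum>k\<in>{1..j}. ?q ^ (j - k))"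
    by (rule sum_distrib_left[symmetric])
  also have "\<dots> \<le> decay \<mu> w j' j * (1 / (1 - ?q))"
    by (rule mult_left_mono[OF geometric]) simp
  finally show ?thesis by simp
qed

lemma zstring_ecomm_decay:
  assumes j: "1 \<le> j" "j \<le> n" "j \<le> j'" and mu: "0 < \<mu>"
    and Z: "\<And>k. k \<in> {1..<j} \<Longrightarrow> ecomm lam \<omega> n t B (site k pauli_z) \<le> K * decay \<mu> w j' k"
    and M: "opnorm n M \<le> 1" "opnorm n (madj M) \<le> 1"
    and MB: "ecomm lam \<omega> n t B M \<le> K * decay \<mu> w j' j" "ecomm lam \<omega> n t B (madj M) \<le> K * decay \<mu> w j' j"
  shows "ecomm lam \<omega> n t B (zstring n [1..<j] M) \<le> K * decay \<mu> w j' j / (1 - exp (- \<mu>))"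
    and "ecomm lam \<omega> n t B (madj (zstring n [1..<j] M)) \<le> K * decay \<mu> w j' j / (1 - exp (- \<mu>))"
proof -
  have K: "0 \<le> K" using order_trans[OF opnorm_nonneg MB(1)] by (simp add: zero_le_mult_iff)
  have "(\<Sum>k\<leftarrow>[1..<j]. ecomm lam \<omega> n t B (site k pauli_z)) + K * decay \<mu> w j' j
        \<le> (\<Sum>k\<in>{1..<j}. K * decay \<mu> w j' k) + K * decay \<mu> w j' j"
    using Z by (auto simp: sum_list_distinct_conv_sum_set intro!: sum_mono)
  also have "\<dots> = K * (\<Sum>k\<in>{1..j}. decay \<mu> w j' k)"
  proof -
    have "{1..j} = insert j {1..<j}" using j(1) by auto
    then show ?thesis by (simp add: sum_distrib_left distrib_left)
  qed
  also have "\<dots> \<le> K * decay \<mu> w j' j / (1 - exp (- \<mu>))"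
    using mult_left_mono[OF decay_sum[OF mu j(3)] K] by simp
  finally have sum_bound: "(\<Sum>k\<leftarrow>[1..<j]. ecomm lam \<omega> n t B (site k pauli_z)) + K * decay \<mu> w j' j
                     \<le> K * decay \<mu> w j' j / (1 - exp (- \<mu>))" .
  have "set [1..<j] \<subseteq> {1..n}" using j by auto
  note string = zstring_ecomm[OF this M, of lam \<omega> t B]
  show "ecomm lam \<omega> n t B (zstring n [1..<j] M) \<le> K * decay \<mu> w j' j / (1 - exp (- \<mu>))"
    using string MB(1) sum_bound by linarith
  show "ecomm lam \<omega> n t B (madj (zstring n [1..<j] M)) \<le> K * decay \<mu> w j' j / (1 - exp (- \<mu>))"
    using string MB(2) sum_bound by linarith
qed

section \<open>Passing between spins and fermions\<close>

text \<open>sigma^z_k = 1 - 2 c_k c_k^*, so the evolved commutator of sigma^z_k is controlled by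
  those of c_k and c_k^*.\<close>
lemma ecomm_z_le_jw:
  assumes k: "1 \<le> k" "k \<le> n"
  shows "ecomm lam \<omega> n t B (site k pauli_z)
         \<le> 2 * (ecomm lam \<omega> n t B (jw n k) + ecomm lam \<omega> n t B (madj (jw n k)))"
proof -
  let ?X = "mmult n (jw n k) (madj (jw n k))"
  have "eqv n (site k pauli_z) (msub (mid n) (mscale 2 ?X))"
    using z_via_e11[of n k] msub_cong[OF eqv_refl mscale_cong[OF eqv_sym[OF jw_mmult_adj[OF k]]]]
    by (rule eqv_trans)
  then have "ecomm lam \<omega> n t B (site k pauli_z) = ecomm lam \<omega> n t B (msub (mid n) (mscale 2 ?X))"
    by (rule ecomm_cong)
  also have "\<dots> \<le> ecomm lam \<omega> n t B (mid n) + 2 * ecomm lam \<omega> n t B ?X"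
    using ecomm_msub[of n lam \<omega> t "mid n" "mscale 2 ?X" B] ecomm_mscale[of n lam \<omega> t 2 ?X B]
    by (simp add: ecomm_mid)
  also have "\<dots> \<le> 2 * (ecomm lam \<omega> n t B (jw n k) + ecomm lam \<omega> n t B (madj (jw n k)))"
    using ecomm_mmult[OF opnorm_jw[OF k], where lam=lam and \<omega>=\<omega> and t=t and B=B] by (simp add: ecomm_mid)
  finally show ?thesis .
qed

text \<open>An observable at site j is a combination of a_j, a_j^*, a_j a_j^* and 1 - a_j a_j^*
  with coefficients bounded by its norm; hence bounds for a_j and a_j^* give a bound for
  the whole single-site algebra.\<close>
lemma ecomm_loc_alg:
  assumes A: "A \<in> loc_alg n {j}" and j: "j \<in> {1..n}"
    and a: "ecomm lam \<omega> n t B (site j lower) \<le> L" and a_adj: "ecomm lam \<omega> n t B (madj (site j lower)) \<le> L"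
  shows "ecomm lam \<omega> n t B A \<le> 6 * opnorm n A * L"
proof -
  let ?a = "site j lower" and ?E = "site j e11"
  define \<alpha> where "\<alpha> = (\<lambda>a b. A (if a then {j} else {}) (if b then {j} else {}))"
  have coeff: "cmod (\<alpha> a b) \<le> opnorm n A" for a b
    unfolding \<alpha>_def using j by (intro opnorm_entry) auto
  have L: "0 \<le> L" using order_trans[OF opnorm_nonneg a] .
  have "ecomm lam \<omega> n t B ?E = ecomm lam \<omega> n t B (mmult n ?a (madj ?a))"
    by (rule ecomm_cong[OF eqv_sym[OF lower_mmult_adj[OF j]]])
  also have "\<dots> \<le> ecomm lam \<omega> n t B ?a + ecomm lam \<omega> n t B (madj ?a)"
    unfolding madj_site by (rule ecomm_mmult[OF opnorm_site[OF j col_contr2_lower] opnorm_site[OF j col_contr2_lower_adj]])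
  also have "\<dots> \<le> 2 * L" using a a_adj by simp
  finally have E: "ecomm lam \<omega> n t B ?E \<le> 2 * L" .
  have E': "ecomm lam \<omega> n t B (msub (mid n) ?E) \<le> 2 * L"
    using ecomm_msub[of n lam \<omega> t "mid n" ?E B] E by (simp add: ecomm_mid)
  have "ecomm lam \<omega> n t B A = ecomm lam \<omega> n t B
        (madd (madd (mscale (\<alpha> True False) ?a) (mscale (\<alpha> False True) (madj ?a)))
              (madd (mscale (\<alpha> True True) ?E) (mscale (\<alpha> False False) (msub (mid n) ?E))))"
    unfolding \<alpha>_def using A j by (intro ecomm_cong loc_decomp)
  also have "\<dots> \<le> (cmod (\<alpha> True False) * ecomm lam \<omega> n t B ?a + cmod (\<alpha> False True) * ecomm lam \<omega> n t B (madj ?a))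
               + (cmod (\<alpha> True True) * ecomm lam \<omega> n t B ?E + cmod (\<alpha> False False) * ecomm lam \<omega> n t B (msub (mid n) ?E))"
    by (intro order_trans[OF ecomm_madd] add_mono order_trans[OF ecomm_mscale] order_refl)
  also have "\<dots> \<le> (opnorm n A * L + opnorm n A * L) + (opnorm n A * (2 * L) + opnorm n A * (2 * L))"
    using L a a_adj E E' coeff by (intro add_mono mult_mono) auto
  also have "\<dots> = 6 * opnorm n A * L" by (simp add: algebra_simps)
  finally show ?thesis .
qed

lemma LR_imp_LR_fermi:
  assumes "LR lam \<omega> \<alpha>" shows "LR_fermi lam \<omega> \<alpha>"
proof -
  from assms obtain C0 \<mu> v where C0: "C0 > 0" "\<mu> > 0" "v \<ge> 0" and
    H: "\<forall>n j j' t A B. 1 \<le> j \<and> j < j' \<and> j' \<le> n \<and> t > 0 \<and>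
        A \<in> loc_alg n {j} \<and> B \<in> loc_alg n {j'..n} \<longrightarrow>
        ecomm lam \<omega> n t B A \<le> C0 * opnorm n A * opnorm n B * decay \<mu> (v * t powr \<alpha>) j' j"
    unfolding LR_def by blast
  show ?thesis unfolding LR_fermi_def
  proof (rule exI[of _ "2 * C0 / (1 - exp (- \<mu>))"], rule exI[of _ \<mu>], rule exI[of _ v], intro conjI allI impI)
    show "0 < 2 * C0 / (1 - exp (- \<mu>))" using C0 by simp
    show "0 < \<mu>" "0 \<le> v" using C0 by simp_all
    fix n j j' :: nat and t :: real and B
    assume "1 \<le> j \<and> j < j' \<and> j' \<le> n \<and> t > 0 \<and> B \<in> loc_alg n {j'..n}"
    then have j: "1 \<le> j" "j < j'" "j' \<le> n" and t: "t > 0" and B: "B \<in> loc_alg n {j'..n}" by auto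
    let ?K = "C0 * opnorm n B" and ?d = "decay \<mu> (v * t powr \<alpha>) j'"
    have site_bound: "ecomm lam \<omega> n t B (site k M) \<le> ?K * ?d k"
      if "1 \<le> k" "k \<le> j" "col_contr2 M" for k M
    proof -
      have "opnorm n (site k M) \<le> 1" using that j by (intro opnorm_site) auto
      then have "C0 * opnorm n (site k M) * opnorm n B * ?d k \<le> C0 * 1 * opnorm n B * ?d k"
        using C0 by (intro mult_right_mono mult_left_mono) simp_all
      moreover have "k < j'" using that(2) j(2) by simp
      ultimately show ?thesis using H[rule_format, of k j' n t "site k M" B] that(1) j(3) t site_loc B by simp
    qed
    have jn: "1 \<le> j" "j \<le> n" "j \<le> j'" using j by auto
    have z: "ecomm lam \<omega> n t B (site k pauli_z) \<le> ?K * ?d k" if "k \<in> {1..<j}" for k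
      using that by (intro site_bound col_contr2_z) auto
    have a: "opnorm n (site j lower) \<le> 1" "opnorm n (madj (site j lower)) \<le> 1"
      using jn unfolding madj_site by (auto intro: opnorm_site col_contr2_lower col_contr2_lower_adj)
    have aB: "ecomm lam \<omega> n t B (site j lower) \<le> ?K * ?d j" "ecomm lam \<omega> n t B (madj (site j lower)) \<le> ?K * ?d j"
      unfolding madj_site
      by (rule site_bound[OF jn(1) order_refl col_contr2_lower], rule site_bound[OF jn(1) order_refl col_contr2_lower_adj])
    note string = zstring_ecomm_decay[OF jn C0(2) z a aB]
    have "ecomm lam \<omega> n t B (jw n j) + ecomm lam \<omega> n t B (madj (jw n j)) \<le> 2 * (?K * ?d j / (1 - exp (- \<mu>)))"
      unfolding jw_def using string by linarith
    also have "\<dots> = 2 * C0 / (1 - exp (- \<mu>)) * opnorm n B * ?d j" by (simp add: mult_ac)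
    finally show "ecomm lam \<omega> n t B (jw n j) + ecomm lam \<omega> n t B (madj (jw n j))
          \<le> 2 * C0 / (1 - exp (- \<mu>)) * opnorm n B * ?d j" .
  qed
qed

lemma LR_fermi_imp_LR:
  assumes "LR_fermi lam \<omega> \<alpha>" shows "LR lam \<omega> \<alpha>"
proof -
  from assms obtain C1 \<mu> v where C1: "C1 > 0" "\<mu> > 0" "v \<ge> 0" and
    H: "\<forall>n j j' t B. 1 \<le> j \<and> j < j' \<and> j' \<le> n \<and> t > 0 \<and> B \<in> loc_alg n {j'..n} \<longrightarrow>
        ecomm lam \<omega> n t B (jw n j) + ecomm lam \<omega> n t B (madj (jw n j))
          \<le> C1 * opnorm n B * decay \<mu> (v * t powr \<alpha>) j' j"
    unfolding LR_fermi_def by blast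
  show ?thesis unfolding LR_def
  proof (rule exI[of _ "12 * C1 / (1 - exp (- \<mu>))"], rule exI[of _ \<mu>], rule exI[of _ v], intro conjI allI impI)
    show "0 < 12 * C1 / (1 - exp (- \<mu>))" using C1 by simp
    show "0 < \<mu>" "0 \<le> v" using C1 by simp_all
    fix n j j' :: nat and t :: real and A B
    assume "1 \<le> j \<and> j < j' \<and> j' \<le> n \<and> t > 0 \<and> A \<in> loc_alg n {j} \<and> B \<in> loc_alg n {j'..n}"
    then have j: "1 \<le> j" "j < j'" "j' \<le> n" and t: "t > 0" and A: "A \<in> loc_alg n {j}"
      and B: "B \<in> loc_alg n {j'..n}" by auto
    let ?K = "2 * C1 * opnorm n B" and ?d = "decay \<mu> (v * t powr \<alpha>) j'"
    have fermi: "ecomm lam \<omega> n t B (jw n k) + ecomm lam \<omega> n t B (madj (jw n k)) \<le> C1 * opnorm n B * ?d k"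
      if "1 \<le> k" "k \<le> j" for k
      using H[rule_format, of k j' n t B] that j(2,3) t B by simp
    have jn: "1 \<le> j" "j \<le> n" "j \<le> j'" using j by auto
    have z: "ecomm lam \<omega> n t B (site k pauli_z) \<le> ?K * ?d k" if "k \<in> {1..<j}" for k
      using ecomm_z_le_jw[of k n lam \<omega> t B] fermi[of k] that j by auto
    have "ecomm lam \<omega> n t B (jw n j) + ecomm lam \<omega> n t B (madj (jw n j)) \<le> C1 * opnorm n B * ?d j"
      using fermi[of j] j(1) by simp
    moreover have "0 \<le> C1 * opnorm n B * ?d j" using C1 by simp
    moreover have "?K * ?d j = 2 * (C1 * opnorm n B * ?d j)" by simp
    ultimately have c: "ecomm lam \<omega> n t B (jw n j) \<le> ?K * ?d j" "ecomm lam \<omega> n t B (madj (jw n j)) \<le> ?K * ?d j"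
      using opnorm_nonneg[of n "comm n (tau lam \<omega> n t (jw n j)) B"]
        opnorm_nonneg[of n "comm n (tau lam \<omega> n t (madj (jw n j))) B"] by linarith+
    note string = zstring_ecomm_decay[OF jn C1(2) z opnorm_jw[OF jn(1,2)] c]
    have "ecomm lam \<omega> n t B (site j lower) \<le> ?K * ?d j / (1 - exp (- \<mu>))"
      "ecomm lam \<omega> n t B (madj (site j lower)) \<le> ?K * ?d j / (1 - exp (- \<mu>))"
      using string ecomm_cong[OF lower_via_jw[OF jn(1,2)]] ecomm_cong[OF madj_cong[OF lower_via_jw[OF jn(1,2)]]]
      by simp_all
    from ecomm_loc_alg[OF A _ this] j
    have "ecomm lam \<omega> n t B A \<le> 6 * opnorm n A * (?K * ?d j / (1 - exp (- \<mu>)))" by simp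
    also have "\<dots> = 12 * C1 / (1 - exp (- \<mu>)) * opnorm n A * opnorm n B * ?d j" by (simp add: mult_ac)
    finally show "ecomm lam \<omega> n t B A \<le> 12 * C1 / (1 - exp (- \<mu>)) * opnorm n A * opnorm n B * ?d j" .
  qed
qed

text \<open>The equivalence holds for every coupling and phase.\<close>
theorem lemma3p3:
  fixes lam \<omega> \<alpha> :: real
  assumes "\<alpha> > 0" and "lam > 0"
  shows "LR lam \<omega> \<alpha> \<longleftrightarrow> LR_fermi lam \<omega> \<alpha>"
  using LR_imp_LR_fermi LR_fermi_imp_LR by blast

end
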